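(* Let $f\in\mathcal{O}_0(2d)$. For every multi-index $\gamma\in\mathbb{N}^{2d}$ and every $m>0$ there exists $C_{\gamma,m}$ such that for all $Z\in\mathbb{R}^{2d}$, $$\Big|\int_{\mathbb{R}^{2d}}X^\gamma f(X)e^{-|X-Z|^2-iJZ\cdot X}dX\Big|\le C_{\gamma,m}(1+|Z|)^{-m}\sup_{|\alpha|\le m+|\gamma|,\ Y\in\mathbb{R}^{2d}}|\partial_Y^\alpha f(Y)|.$$
   Context: $\mathcal{O}_0(2d)$ is the set of smooth functions on $\mathbb{R}^{2d}$ all of whose derivatives (of every order) are bounded. $J=\begin{pmatrix}0&\mathbb{I}_d\\-\mathbb{I}_d&0\end{pmatrix}$ and $\cdot$ is the Euclidean scalar product. *)

theory Defs
  imports "HOL-Analysis.Analysis"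
begin

text \<open>Phase space R^{2d} is modelled as real ^ ('d + 'd): coordinates Inl i are
  the positions x_i, coordinates Inr i the momenta xi_i.\<close>

definition Jmat :: "real ^ ('d::finite + 'd) \<Rightarrow> real ^ ('d + 'd)" where
  "Jmat Z = (\<chi> k. case k of Inl i \<Rightarrow> Z $ Inr i | Inr i \<Rightarrow> - Z $ Inl i)"

definition partial_d :: "'n::finite \<Rightarrow> (real ^ 'n \<Rightarrow> complex) \<Rightarrow> real ^ 'n \<Rightarrow> complex" where
  "partial_d k f x = vector_derivative (\<lambda>t. f (x + t *\<^sub>R axis k 1)) (at 0)"

fun dpartial :: "'n::finite list \<Rightarrow> (real ^ 'n \<Rightarrow> complex) \<Rightarrow> real ^ 'n \<Rightarrow> complex" where
  "dpartial [] f = f"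
| "dpartial (k # ks) f = partial_d k (dpartial ks f)"

text \<open>A list containing each direction k exactly alpha k times (order is irrelevant for smooth f).\<close>
definition mi_list :: "('n::finite \<Rightarrow> nat) \<Rightarrow> 'n list" where
  "mi_list \<alpha> = (SOME ks. \<forall>k. count_list ks k = \<alpha> k)"

definition mderiv :: "('n::finite \<Rightarrow> nat) \<Rightarrow> (real ^ 'n \<Rightarrow> complex) \<Rightarrow> real ^ 'n \<Rightarrow> complex" where
  "mderiv \<alpha> f = dpartial (mi_list \<alpha>) f"

definition mi_len :: "('n::finite \<Rightarrow> nat) \<Rightarrow> nat" where
  "mi_len \<alpha> = (\<Sum>k\<in>UNIV. \<alpha> k)"

definition mpow :: "real ^ 'n::finite \<Rightarrow> ('n \<Rightarrow> nat) \<Rightarrow> real" where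
  "mpow X \<gamma> = (\<Prod>k\<in>UNIV. (X $ k) ^ \<gamma> k)"

text \<open>Every iterated partial derivative exists and is (Frechet) differentiable everywhere,
  hence f is C^infinity, and every iterated partial derivative is bounded.\<close>
definition O0 :: "(real ^ 'n::finite \<Rightarrow> complex) set" where
  "O0 = {f. \<forall>ks. (\<forall>x. dpartial ks f differentiable (at x)) \<and> bounded (range (dpartial ks f))}"

end

theory Submission
  imports Defs "HOL-Computational_Algebra.Polynomial" "HOL-Probability.Distributions"
begin

text \<open>Translate by \<open>Z\<close>: since \<open>JZ \<bullet> Z = 0\<close>, the integral becomes
  \<open>\<integral> G(Y) e^{-i w \<bullet> Y} dY\<close> with \<open>w = JZ\<close>, \<open>|w| = |Z|\<close> and
  \<open>G(Y) = (Y + Z)^\<gamma> e^{-|Y|^2} f(Z + Y)\<close>. Choose a coordinate \<open>k\<close> with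
  \<open>|w_k| \<ge> |Z| / \<surd>(2d)\<close>; the shift \<open>h = (\<pi> / w_k) e_k\<close> flips the sign of the phase, so by
  translation invariance \<open>\<integral> G e = (-1/2)^N \<integral> (\<Delta>_h^N G) e\<close>. The \<open>N\<close>-th difference is at most
  \<open>|h|^N sup |\<partial>_k^N G|\<close>, and by the Leibniz rule \<open>\<partial>_k^N G\<close> is bounded by
  \<open>(1 + |Z|)^{|\<gamma>|}\<close> times a Gaussian times the sup of the derivatives of \<open>f\<close> of order at most
  \<open>N\<close>. With \<open>N = m + |\<gamma>|\<close> and \<open>|h| \<lesssim> 1 / (1 + |Z|)\<close> this gives the decay
  \<open>(1 + |Z|)^{-m}\<close>; for bounded \<open>Z\<close> the trivial bound suffices. Finite differences replace
  integration by parts, so only single-direction derivatives \<open>\<partial>_k^j f\<close>, \<open>j \<le> N\<close>, are used.\<close>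

section \<open>Derivatives of Gaussian monomials\<close>

fun gauss_deriv_poly :: "nat \<Rightarrow> nat \<Rightarrow> real poly" where
  "gauss_deriv_poly b 0 = monom 1 b"
| "gauss_deriv_poly b (Suc i) = pderiv (gauss_deriv_poly b i) - [:0, 2:] * gauss_deriv_poly b i"

definition gauss_mono_deriv :: "nat \<Rightarrow> nat \<Rightarrow> real \<Rightarrow> real" where
  "gauss_mono_deriv b i s = poly (gauss_deriv_poly b i) s * exp (- s\<^sup>2)"

lemma gauss_mono_deriv_0: "gauss_mono_deriv b 0 s = s ^ b * exp (- s\<^sup>2)"
  by (simp add: gauss_mono_deriv_def poly_monom)

lemma has_real_derivative_gauss_mono_deriv:
  "(gauss_mono_deriv b i has_real_derivative gauss_mono_deriv b (Suc i) s) (at s)"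
  unfolding gauss_mono_deriv_def
  by (auto intro!: derivative_eq_intros simp: algebra_simps power2_eq_square)

lemma abs_poly_le:
  fixes p :: "real poly"
  shows "\<bar>poly p s\<bar> \<le> (\<Sum>i\<le>degree p. \<bar>coeff p i\<bar>) * (1 + \<bar>s\<bar>) ^ degree p"
proof -
  have "\<bar>poly p s\<bar> \<le> (\<Sum>i\<le>degree p. \<bar>coeff p i * s ^ i\<bar>)"
    by (subst poly_altdef) (rule sum_abs)
  also have "\<dots> \<le> (\<Sum>i\<le>degree p. \<bar>coeff p i\<bar> * (1 + \<bar>s\<bar>) ^ degree p)"
  proof (rule sum_mono)
    fix i assume "i \<in> {..degree p}"
    then have "\<bar>s\<bar> ^ i \<le> (1 + \<bar>s\<bar>) ^ i" "(1 + \<bar>s\<bar>) ^ i \<le> (1 + \<bar>s\<bar>) ^ degree p"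
      by (auto intro!: power_mono power_increasing)
    then show "\<bar>coeff p i * s ^ i\<bar> \<le> \<bar>coeff p i\<bar> * (1 + \<bar>s\<bar>) ^ degree p"
      by (auto simp: abs_mult power_abs intro!: mult_left_mono)
  qed
  finally show ?thesis by (simp add: sum_distrib_right)
qed

lemma one_plus_abs_power_le_exp: "(1 + \<bar>s\<bar>) ^ d \<le> exp (real d ^ 2 / 2) * exp (s ^ 2 / 2)"
proof -
  have "(1 + \<bar>s\<bar>) ^ d \<le> exp \<bar>s\<bar> ^ d"
    by (intro power_mono) auto
  also have "\<dots> = exp (real d * \<bar>s\<bar>)" by (simp add: exp_of_nat_mult)
  also have "\<dots> \<le> exp (real d ^ 2 / 2 + s ^ 2 / 2)"
  proof -
    have "0 \<le> (real d - \<bar>s\<bar>)^2" by simp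
    then have "real d * \<bar>s\<bar> \<le> real d ^ 2 / 2 + s ^ 2 / 2"
      by (simp add: power2_eq_square algebra_simps)
    then show ?thesis by simp
  qed
  finally show ?thesis by (simp add: exp_add)
qed

lemma gauss_mono_deriv_bound: "\<exists>K. \<forall>s. \<bar>gauss_mono_deriv b i s\<bar> \<le> K * exp (- s\<^sup>2 / 2)"
proof -
  define p where "p = gauss_deriv_poly b i"
  define K where "K = (\<Sum>i\<le>degree p. \<bar>coeff p i\<bar>) * exp (real (degree p) ^ 2 / 2)"
  have "\<bar>gauss_mono_deriv b i s\<bar> \<le> K * exp (- s\<^sup>2 / 2)" for s
  proof -
    have "\<bar>gauss_mono_deriv b i s\<bar> = \<bar>poly p s\<bar> * exp (- s\<^sup>2)"
      by (simp add: gauss_mono_deriv_def p_def abs_mult)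
    also have "\<dots> \<le> ((\<Sum>i\<le>degree p. \<bar>coeff p i\<bar>) *
        (exp (real (degree p) ^ 2 / 2) * exp (s ^ 2 / 2))) * exp (- s\<^sup>2)"
      by (intro mult_right_mono order.trans[OF abs_poly_le] mult_left_mono
          one_plus_abs_power_le_exp) (auto intro: sum_nonneg)
    also have "\<dots> = K * (exp (s ^ 2 / 2) * exp (- s\<^sup>2))" by (simp add: K_def)
    also have "exp (s ^ 2 / 2) * exp (- s\<^sup>2) = exp (- s\<^sup>2 / 2)" by (simp flip: exp_add)
    finally show ?thesis .
  qed
  then show ?thesis by blast
qed

lemma gauss_mono_deriv_uniform_bound:
  "\<exists>K\<ge>0. \<forall>b\<le>B. \<forall>i\<le>I. \<forall>s. \<bar>gauss_mono_deriv b i s\<bar> \<le> K * exp (- s\<^sup>2 / 2)"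
proof -
  obtain Kf where Kf: "\<And>b i s. \<bar>gauss_mono_deriv b i s\<bar> \<le> Kf b i * exp (- s\<^sup>2 / 2)"
    using gauss_mono_deriv_bound by metis
  define K where "K = (\<Sum>b\<le>B. \<Sum>i\<le>I. \<bar>Kf b i\<bar>)"
  have "\<bar>gauss_mono_deriv b i s\<bar> \<le> K * exp (- s\<^sup>2 / 2)" if "b \<le> B" "i \<le> I" for b i s
  proof -
    have "Kf b i \<le> (\<Sum>i\<le>I. \<bar>Kf b i\<bar>)"
      using member_le_sum[of i "{..I}" "\<lambda>i. \<bar>Kf b i\<bar>"] that by auto
    also have "\<dots> \<le> K" unfolding K_def
      by (rule member_le_sum[where f = "\<lambda>b. \<Sum>i\<le>I. \<bar>Kf b i\<bar>"])
        (use that in \<open>auto intro: sum_nonneg\<close>)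
    finally have "Kf b i * exp (- s\<^sup>2 / 2) \<le> K * exp (- s\<^sup>2 / 2)"
      by (intro mult_right_mono) auto
    with Kf[of b i s] show ?thesis by linarith
  qed
  moreover have "K \<ge> 0" unfolding K_def by (intro sum_nonneg) auto
  ultimately show ?thesis by blast
qed

text \<open>The derivatives of \<open>(s + z)^a e^{-s^2}\<close>, expanded binomially so that their
  dependence on \<open>z\<close> is explicit.\<close>

definition gauss_shift_deriv :: "nat \<Rightarrow> real \<Rightarrow> nat \<Rightarrow> real \<Rightarrow> real" where
  "gauss_shift_deriv a z i s = (\<Sum>b\<le>a. of_nat (a choose b) * z ^ (a - b) * gauss_mono_deriv b i s)"

lemma gauss_shift_deriv_0: "gauss_shift_deriv a z 0 s = (s + z) ^ a * exp (- s\<^sup>2)"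
  by (simp add: gauss_shift_deriv_def gauss_mono_deriv_0 binomial_ring sum_distrib_right
      sum_distrib_left algebra_simps)

lemma has_real_derivative_gauss_shift_deriv:
  "(gauss_shift_deriv a z i has_real_derivative gauss_shift_deriv a z (Suc i) s) (at s)"
  unfolding gauss_shift_deriv_def
  by (intro DERIV_sum DERIV_cmult has_real_derivative_gauss_mono_deriv)

lemma gauss_shift_deriv_uniform_bound:
  "\<exists>K\<ge>0. \<forall>a\<le>A. \<forall>i\<le>I. \<forall>z s. \<bar>gauss_shift_deriv a z i s\<bar> \<le> K * (1 + \<bar>z\<bar>) ^ a * exp (- s\<^sup>2 / 2)"
proof -
  obtain K where "K \<ge> 0" and K: "\<forall>b\<le>A. \<forall>i\<le>I. \<forall>s. \<bar>gauss_mono_deriv b i s\<bar> \<le> K * exp (- s\<^sup>2 / 2)"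
    using gauss_mono_deriv_uniform_bound by blast
  have "\<bar>gauss_shift_deriv a z i s\<bar> \<le> K * (1 + \<bar>z\<bar>) ^ a * exp (- s\<^sup>2 / 2)"
    if "a \<le> A" "i \<le> I" for a i z s
  proof -
    have "\<bar>gauss_shift_deriv a z i s\<bar> \<le>
        (\<Sum>b\<le>a. \<bar>of_nat (a choose b) * z ^ (a - b) * gauss_mono_deriv b i s\<bar>)"
      unfolding gauss_shift_deriv_def by (rule sum_abs)
    also have "\<dots> \<le> (\<Sum>b\<le>a. of_nat (a choose b) * \<bar>z\<bar> ^ (a - b) * (K * exp (- s\<^sup>2 / 2)))"
    proof (rule sum_mono)
      fix b assume "b \<in> {..a}"
      then have "\<bar>gauss_mono_deriv b i s\<bar> \<le> K * exp (- s\<^sup>2 / 2)" using K that by auto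
      then show "\<bar>of_nat (a choose b) * z ^ (a - b) * gauss_mono_deriv b i s\<bar> \<le>
          of_nat (a choose b) * \<bar>z\<bar> ^ (a - b) * (K * exp (- s\<^sup>2 / 2))"
        by (simp add: abs_mult power_abs mult_left_mono)
    qed
    also have "\<dots> = (\<Sum>b\<le>a. of_nat (a choose b) * 1 ^ b * \<bar>z\<bar> ^ (a - b)) * (K * exp (- s\<^sup>2 / 2))"
      by (simp add: sum_distrib_right)
    also have "(\<Sum>b\<le>a. of_nat (a choose b) * 1 ^ b * \<bar>z\<bar> ^ (a - b)) = (1 + \<bar>z\<bar>) ^ a"
      by (rule binomial_ring[symmetric])
    finally show ?thesis by (simp add: algebra_simps)
  qed
  with \<open>K \<ge> 0\<close> show ?thesis by blast
qed

lemma exp_shifted_square_le: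
  fixes y s r :: real
  assumes "\<bar>s\<bar> \<le> r"
  shows "exp (- (y + s)\<^sup>2 / 2) \<le> exp (r\<^sup>2 / 2) * exp (- y\<^sup>2 / 4)"
proof -
  have "\<bar>s\<bar> \<le> \<bar>r\<bar>" using assms by linarith
  then have "s\<^sup>2 \<le> r\<^sup>2" by (simp add: abs_le_square_iff)
  moreover have "0 \<le> (y + 2 * s)\<^sup>2" by simp
  moreover have "(y + s)\<^sup>2 = y\<^sup>2 + 2 * (y * s) + s\<^sup>2" "(y + 2 * s)\<^sup>2 = y\<^sup>2 + 4 * (y * s) + 4 * s\<^sup>2"
    by (simp_all add: power2_eq_square algebra_simps)
  ultimately have "- (y + s)\<^sup>2 / 2 \<le> r\<^sup>2 / 2 + - y\<^sup>2 / 4"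
    by linarith
  then show ?thesis by (simp flip: exp_add)
qed

lemma power_abs_add_mult_gauss_le:
  fixes y z R :: real
  assumes "\<bar>z\<bar> \<le> R"
  shows "\<bar>y + z\<bar> ^ b * exp (- y\<^sup>2) \<le> ((1 + R) ^ b * exp (real b ^ 2 / 2)) * exp (- y\<^sup>2 / 4)"
proof -
  have R: "0 \<le> R" using assms by linarith
  have "\<bar>y + z\<bar> \<le> (1 + R) * (1 + \<bar>y\<bar>)"
    using assms R by (simp add: algebra_simps) (smt (verit) mult_nonneg_nonneg abs_ge_zero)
  then have "\<bar>y + z\<bar> ^ b \<le> ((1 + R) * (1 + \<bar>y\<bar>)) ^ b" by (intro power_mono) auto
  also have "\<dots> = (1 + R) ^ b * (1 + \<bar>y\<bar>) ^ b" by (simp add: power_mult_distrib)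
  also have "\<dots> \<le> (1 + R) ^ b * (exp (real b ^ 2 / 2) * exp (y ^ 2 / 2))"
    by (intro mult_left_mono one_plus_abs_power_le_exp) (use R in auto)
  finally have "\<bar>y + z\<bar> ^ b * exp (- y\<^sup>2) \<le>
      (1 + R) ^ b * (exp (real b ^ 2 / 2) * exp (y ^ 2 / 2)) * exp (- y\<^sup>2)"
    by (intro mult_right_mono) auto
  also have "\<dots> = ((1 + R) ^ b * exp (real b ^ 2 / 2)) * (exp (y ^ 2 / 2) * exp (- y\<^sup>2))"
    by (simp add: algebra_simps)
  also have "exp (y ^ 2 / 2) * exp (- y\<^sup>2) = exp (- y\<^sup>2 / 2)" by (simp flip: exp_add)
  also have "\<dots> \<le> exp (- y\<^sup>2 / 4)" by simp
  finally show ?thesis using R by (simp add: mult_left_mono)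
qed

section \<open>The Leibniz rule along a line\<close>

lemma binomial_convolution_Suc:
  fixes a b :: "nat \<Rightarrow> 'a::comm_ring_1"
  shows "(\<Sum>i\<le>j. of_nat (j choose i) * (a (Suc i) * b (j - i) + a i * b (Suc (j - i))))
       = (\<Sum>i\<le>Suc j. of_nat (Suc j choose i) * a i * b (Suc j - i))"
proof -
  have lower: "(\<Sum>i\<le>j. of_nat (j choose i) * a i * b (Suc j - i)) =
      a 0 * b (Suc j) + (\<Sum>i\<le>j. of_nat (j choose Suc i) * a (Suc i) * b (j - i))"
  proof -
    have "(\<Sum>i\<le>j. of_nat (j choose i) * a i * b (Suc j - i))
        = (\<Sum>i\<le>Suc j. of_nat (j choose i) * a i * b (Suc j - i))"
      by (simp add: binomial_eq_0)
    also have "\<dots> = a 0 * b (Suc j) + (\<Sum>i\<le>j. of_nat (j choose Suc i) * a (Suc i) * b (j - i))"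
      by (subst sum.atMost_Suc_shift) (simp add: binomial_eq_0)
    finally show ?thesis .
  qed
  have "(\<Sum>i\<le>Suc j. of_nat (Suc j choose i) * a i * b (Suc j - i))
      = a 0 * b (Suc j) + (\<Sum>i\<le>j. of_nat (Suc j choose Suc i) * a (Suc i) * b (j - i))"
    by (subst sum.atMost_Suc_shift) simp
  also have "\<dots> = a 0 * b (Suc j) + (\<Sum>i\<le>j. of_nat (j choose i) * a (Suc i) * b (j - i))
        + (\<Sum>i\<le>j. of_nat (j choose Suc i) * a (Suc i) * b (j - i))"
    by (simp add: sum.distrib algebra_simps)
  also have "\<dots> = (\<Sum>i\<le>j. of_nat (j choose i) * a (Suc i) * b (j - i))
        + (\<Sum>i\<le>j. of_nat (j choose i) * a i * b (Suc j - i))"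
    by (simp add: lower)
  also have "\<dots> = (\<Sum>i\<le>j. of_nat (j choose i) * (a (Suc i) * b (j - i) + a i * b (Suc (j - i))))"
    by (simp add: sum.distrib algebra_simps Suc_diff_le)
  finally show ?thesis ..
qed

lemma has_vector_derivative_leibniz_sum:
  fixes u v :: "nat \<Rightarrow> real \<Rightarrow> complex"
  assumes u: "\<And>j t. (u j has_vector_derivative u (Suc j) t) (at t)"
    and v: "\<And>j t. (v j has_vector_derivative v (Suc j) t) (at t)"
  shows "((\<lambda>t. \<Sum>i\<le>j. of_nat (j choose i) * u i t * v (j - i) t) has_vector_derivative
          (\<Sum>i\<le>Suc j. of_nat (Suc j choose i) * u i t * v (Suc j - i) t)) (at t)"
proof -
  have "((\<lambda>t. \<Sum>i\<le>j. of_nat (j choose i) * u i t * v (j - i) t) has_vector_derivative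
          (\<Sum>i\<le>j. of_nat (j choose i) * (u (Suc i) t * v (j - i) t + u i t * v (Suc (j - i)) t))) (at t)"
  proof (rule has_vector_derivative_sum)
    fix i
    have "((\<lambda>t. of_nat (j choose i) * (u i t * v (j - i) t)) has_vector_derivative
       of_nat (j choose i) * (u i t * v (Suc (j - i)) t + u (Suc i) t * v (j - i) t)) (at t)"
      using has_vector_derivative_mult[OF u[of i t] v[of "j - i" t]]
      by (intro has_vector_derivative_mult_right) simp
    then show "((\<lambda>t. of_nat (j choose i) * u i t * v (j - i) t) has_vector_derivative
       of_nat (j choose i) * (u (Suc i) t * v (j - i) t + u i t * v (Suc (j - i)) t)) (at t)"
      by (simp add: algebra_simps)
  qed
  then show ?thesis
    using binomial_convolution_Suc[of j "\<lambda>i. u i t" "\<lambda>i. v i t"] by simp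
qed

lemma norm_leibniz_sum_le:
  fixes u v :: "nat \<Rightarrow> complex"
  assumes "\<And>i. i \<le> N \<Longrightarrow> cmod (u i) \<le> U" and "\<And>i. i \<le> N \<Longrightarrow> cmod (v i) \<le> V"
  shows "cmod (\<Sum>i\<le>N. of_nat (N choose i) * u i * v (N - i)) \<le> 2 ^ N * U * V"
proof -
  have "U \<ge> 0" using assms(1)[of 0] norm_ge_zero[of "u 0"] by linarith
  have "cmod (\<Sum>i\<le>N. of_nat (N choose i) * u i * v (N - i)) \<le>
      (\<Sum>i\<le>N. cmod (of_nat (N choose i) * u i * v (N - i)))"
    by (rule norm_sum)
  also have "\<dots> \<le> (\<Sum>i\<le>N. of_nat (N choose i) * (U * V))"
  proof (rule sum_mono)
    fix i assume "i \<in> {..N}"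
    then have "cmod (u i) * cmod (v (N - i)) \<le> U * V"
      using assms \<open>U \<ge> 0\<close> by (intro mult_mono) auto
    then show "cmod (of_nat (N choose i) * u i * v (N - i)) \<le> of_nat (N choose i) * (U * V)"
      by (simp add: norm_mult mult.assoc mult_left_mono)
  qed
  also have "\<dots> = 2 ^ N * U * V"
    by (simp add: choose_row_sum mult.assoc flip: sum_distrib_right of_nat_sum)
  finally show ?thesis .
qed

section \<open>Iterated finite differences\<close>

definition fdiff :: "real \<Rightarrow> (real \<Rightarrow> 'a::real_normed_vector) \<Rightarrow> real \<Rightarrow> 'a" where
  "fdiff c g t = g (t + c) - g t"

lemma norm_diff_le_of_vector_derivative_bound:
  fixes g :: "real \<Rightarrow> 'a::real_normed_vector"
  assumes "\<And>s. s \<in> closed_segment a b \<Longrightarrow> (g has_vector_derivative g' s) (at s)"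
    and "\<And>s. s \<in> closed_segment a b \<Longrightarrow> norm (g' s) \<le> B"
  shows "norm (g b - g a) \<le> B * \<bar>b - a\<bar>"
proof -
  have "norm (g b - g a) \<le> B * norm (b - a)"
  proof (rule differentiable_bound[where f' = "\<lambda>s h. h *\<^sub>R g' s"])
    fix x assume x: "x \<in> closed_segment a b"
    show "(g has_derivative (\<lambda>h. h *\<^sub>R g' x)) (at x within closed_segment a b)"
      using assms(1)[OF x] unfolding has_vector_derivative_def by (rule has_derivative_at_withinI)
    have "onorm (\<lambda>h. h *\<^sub>R g' x) = onorm (\<lambda>h::real. h) * norm (g' x)"
      by (rule onorm_scaleR_left) simp
    then show "onorm (\<lambda>h. h *\<^sub>R g' x) \<le> B" using assms(2)[OF x] onorm_id[where 'a=real] by simp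
  qed auto
  then show ?thesis by simp
qed

lemma closed_segment_step_subset:
  fixes c s t :: real
  assumes "s \<in> closed_segment t (t + real N * c)"
  shows "closed_segment s (s + c) \<subseteq> closed_segment t (t + real (Suc N) * c)"
proof -
  have "0 \<le> c \<Longrightarrow> 0 \<le> c * real N" and "c \<le> 0 \<Longrightarrow> c * real N \<le> 0"
    by (auto simp: mult_nonpos_nonneg)
  then show ?thesis using assms
    by (auto simp: closed_segment_eq_real_ivl algebra_simps split: if_splits; linarith)
qed

lemma norm_funpow_fdiff_le:
  fixes g :: "nat \<Rightarrow> real \<Rightarrow> 'a::real_normed_vector"
  assumes "\<And>j t. (g j has_vector_derivative g (Suc j) t) (at t)"
    and "\<And>s. s \<in> closed_segment t (t + real N * c) \<Longrightarrow> norm (g N s) \<le> B"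
  shows "norm ((fdiff c ^^ N) (g 0) t) \<le> \<bar>c\<bar> ^ N * B"
  using assms
proof (induction N arbitrary: g B)
  case 0
  then show ?case by simp
next
  case (Suc N)
  define g' where "g' j = fdiff c (g j)" for j
  have "((\<lambda>t. g j (t + c)) has_vector_derivative g (Suc j) (t + c)) (at t)" for j t
  proof -
    have "((\<lambda>t. t + c) has_vector_derivative 1) (at t)"
      by (auto intro!: derivative_eq_intros)
    from vector_diff_chain_at[OF this Suc.prems(1)[of j "t + c"]] show ?thesis
      by (simp add: o_def)
  qed
  then have "(g' j has_vector_derivative g' (Suc j) t) (at t)" for j t
    unfolding g'_def fdiff_def by (intro has_vector_derivative_diff Suc.prems(1))
  moreover have "norm (g' N s) \<le> \<bar>c\<bar> * B" if "s \<in> closed_segment t (t + real N * c)" for s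
  proof -
    have "norm (g N (s + c) - g N s) \<le> B * \<bar>(s + c) - s\<bar>"
      by (rule norm_diff_le_of_vector_derivative_bound[where g' = "g (Suc N)"])
        (use Suc.prems closed_segment_step_subset[OF that] in auto)
    then show ?thesis by (simp add: g'_def fdiff_def mult.commute)
  qed
  ultimately have "norm ((fdiff c ^^ N) (g' 0) t) \<le> \<bar>c\<bar> ^ N * (\<bar>c\<bar> * B)"
    by (intro Suc.IH) auto
  moreover have "(fdiff c ^^ Suc N) (g 0) = (fdiff c ^^ N) (g' 0)"
    by (simp only: funpow_Suc_right o_apply g'_def)
  ultimately show ?case by (simp add: mult_ac)
qed

lemma has_vector_derivative_along_line:
  fixes g :: "'a::real_normed_vector \<Rightarrow> 'b::real_normed_vector"
  assumes "(g has_derivative g') (at (x + t *\<^sub>R v))"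
  shows "((\<lambda>s. g (x + s *\<^sub>R v)) has_vector_derivative g' v) (at t)"
proof -
  have "((\<lambda>s. x + s *\<^sub>R v) has_derivative (\<lambda>h. h *\<^sub>R v)) (at t)"
    by (auto intro!: derivative_eq_intros)
  then have "((g \<circ> (\<lambda>s. x + s *\<^sub>R v)) has_derivative (g' \<circ> (\<lambda>h. h *\<^sub>R v))) (at t)"
    by (rule diff_chain_at) (use assms in simp)
  moreover have "(g' \<circ> (\<lambda>h. h *\<^sub>R v)) = (\<lambda>h. h *\<^sub>R g' v)"
    using has_derivative_linear[OF assms] by (auto simp: fun_eq_iff linear_scale)
  ultimately show ?thesis unfolding has_vector_derivative_def by (simp add: o_def)
qed

lemma has_vector_derivative_partial_d:
  fixes g :: "real ^ 'n::finite \<Rightarrow> complex"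
  assumes "\<And>y. g differentiable (at y)"
  shows "((\<lambda>t. g (x + t *\<^sub>R axis k 1)) has_vector_derivative partial_d k g (x + t *\<^sub>R axis k 1)) (at t)"
proof -
  obtain g' where g': "(g has_derivative g') (at (x + t *\<^sub>R axis k 1))"
    using assms unfolding differentiable_def by blast
  have "((\<lambda>s. g ((x + t *\<^sub>R axis k 1) + s *\<^sub>R axis k 1)) has_vector_derivative g' (axis k 1)) (at 0)"
    by (rule has_vector_derivative_along_line) (use g' in simp)
  then have "partial_d k g (x + t *\<^sub>R axis k 1) = g' (axis k 1)"
    unfolding partial_d_def by (rule vector_derivative_at)
  with has_vector_derivative_along_line[OF g'] show ?thesis by simp
qed

lemma has_vector_derivative_dpartial_replicate:
  fixes f :: "real ^ 'n::finite \<Rightarrow> complex"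
  assumes "\<And>ks y. dpartial ks f differentiable (at y)"
  shows "((\<lambda>t. dpartial (replicate j k) f (x + t *\<^sub>R axis k 1)) has_vector_derivative
           dpartial (replicate (Suc j) k) f (x + t *\<^sub>R axis k 1)) (at t)"
  using has_vector_derivative_partial_d[of "dpartial (replicate j k) f" x k t] assms by simp

lemma mi_list_single:
  fixes k :: "'n::finite"
  shows "mi_list (\<lambda>l. if l = k then j else 0) = replicate j k"
proof -
  let ?a = "\<lambda>l. if l = k then j else 0"
  have "count_list (replicate j k) l = ?a l" for l
    by (induction j) auto
  then have "\<forall>l. count_list (mi_list ?a) l = ?a l"
    unfolding mi_list_def by (intro someI_ex[of "\<lambda>ks. \<forall>l. count_list ks l = ?a l"]) blast
  then have count: "count_list (mi_list ?a) l = ?a l" for l by blast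
  have all_k: "\<forall>x\<in>set (mi_list ?a). x = k"
  proof
    fix x assume "x \<in> set (mi_list ?a)"
    then have "count_list (mi_list ?a) x \<noteq> 0" by (simp add: count_list_0_iff)
    then show "x = k" using count[of x] by (auto split: if_splits)
  qed
  then have "mi_list ?a = replicate (length (mi_list ?a)) k"
    by (simp add: replicate_length_same)
  moreover have "filter ((=) k) (mi_list ?a) = mi_list ?a"
    using all_k by (intro filter_True) auto
  then have "length (mi_list ?a) = j"
    using count[of k] by (simp add: count_list_eq_length_filter)
  ultimately show ?thesis by simp
qed

lemma integrable_exp_neg_square_quarter: "integrable lborel (\<lambda>s::real. exp (- s\<^sup>2 / 4))"
proof -
  have "integrable lborel (\<lambda>x. sqrt (2 * pi * (sqrt 2)\<^sup>2) * normal_density 0 (sqrt 2) x)"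
    by (rule integrable_mult_right) simp
  moreover have "(\<lambda>x. sqrt (2 * pi * (sqrt 2)\<^sup>2) * normal_density 0 (sqrt 2) x) =
      (\<lambda>s::real. exp (- s\<^sup>2 / 4))"
    by (auto simp: normal_density_def fun_eq_iff)
  ultimately show ?thesis by (simp only:)
qed

lemma prod_Basis_vec_nth:
  fixes Y :: "real ^ 'n::finite"
  shows "(\<Prod>b\<in>Basis. h (Y \<bullet> b)) = (\<Prod>l\<in>UNIV. h (Y $ l))"
proof -
  have B: "(Basis :: (real ^ 'n) set) = (\<lambda>l. axis l 1) ` UNIV"
    by (auto simp: Basis_vec_def)
  have "inj (\<lambda>l::'n. axis l (1::real))"
    by (auto simp: inj_def axis_eq_axis)
  then show ?thesis unfolding B by (subst prod.reindex) (simp_all add: inner_axis o_def)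
qed

definition quarter_gauss :: "real ^ 'n::finite \<Rightarrow> real" where
  "quarter_gauss Y = (\<Prod>l\<in>UNIV. exp (- (Y $ l)\<^sup>2 / 4))"

lemma quarter_gauss_nonneg: "0 \<le> quarter_gauss Y"
  by (simp add: quarter_gauss_def prod_nonneg)

lemma integrable_quarter_gauss: "integrable lborel (quarter_gauss :: real ^ 'n::finite \<Rightarrow> real)"
proof -
  have "(\<integral>\<^sup>+Y. ennreal (norm (quarter_gauss Y)) \<partial>(lborel :: (real ^ 'n) measure))
     = (\<integral>\<^sup>+Y. (\<Prod>b\<in>Basis. ennreal (exp (- (Y \<bullet> b)\<^sup>2 / 4))) \<partial>(lborel :: (real ^ 'n) measure))"
  proof (rule nn_integral_cong)
    fix Y :: "real ^ 'n"
    show "ennreal (norm (quarter_gauss Y)) = (\<Prod>b\<in>Basis. ennreal (exp (- (Y \<bullet> b)\<^sup>2 / 4)))"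
      using prod_Basis_vec_nth[of "\<lambda>y. exp (- y\<^sup>2 / 4)" Y]
      by (simp add: quarter_gauss_def prod_ennreal abs_prod)
  qed
  also have "\<dots> = (\<Prod>b\<in>(Basis :: (real ^ 'n) set). \<integral>\<^sup>+s. ennreal (exp (- s\<^sup>2 / 4)) \<partial>lborel)"
    by (rule nn_integral_lborel_prod) auto
  also have "\<dots> < \<infinity>"
  proof -
    have "(\<integral>\<^sup>+s. ennreal (exp (- s\<^sup>2 / 4)) \<partial>lborel) < \<infinity>"
      using integrable_exp_neg_square_quarter unfolding integrable_iff_bounded by simp
    then show ?thesis by (simp add: less_top[symmetric] ennreal_prod_eq_top power_eq_top_ennreal)
  qed
  moreover have "quarter_gauss \<in> borel_measurable (lborel :: (real ^ 'n) measure)"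
    unfolding quarter_gauss_def by measurable
  ultimately show ?thesis unfolding integrable_iff_bounded by simp
qed

lemma
  fixes f :: "'a::euclidean_space \<Rightarrow> 'b::{banach, second_countable_topology}"
  assumes "integrable lborel f"
  shows integrable_lborel_translate: "integrable lborel (\<lambda>x. f (c + x))"
    and lborel_integral_translate: "(\<integral>x. f (c + x) \<partial>lborel) = (\<integral>x. f x \<partial>lborel)"
proof -
  have f: "f \<in> borel_measurable borel" using assms borel_measurable_integrable by auto
  have c: "((+) c) \<in> measurable lborel borel" by simp
  show "integrable lborel (\<lambda>x. f (c + x))"
    using assms integrable_distr_eq[OF c f] lborel_distr_plus[of c] by simp
  show "(\<integral>x. f (c + x) \<partial>lborel) = (\<integral>x. f x \<partial>lborel)"
    using integral_distr[OF c f] lborel_distr_plus[of c] by simp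
qed

section \<open>Finite differences against an antiperiodic weight\<close>

definition vdiff :: "'a::real_vector \<Rightarrow> ('a \<Rightarrow> 'b::real_vector) \<Rightarrow> 'a \<Rightarrow> 'b" where
  "vdiff h H Y = H (Y + h) - H Y"

text \<open>If the weight \<open>E\<close> changes sign under the shift by \<open>h\<close>, translation invariance of the
  Lebesgue integral gives \<open>\<integral> H E = - \<integral> H(Y + h) E(Y)\<close>, hence \<open>\<integral> H E = -1/2 \<integral> (vdiff h H) E\<close>.\<close>

lemma integral_antiperiodic_vdiff:
  fixes H E :: "'a::euclidean_space \<Rightarrow> complex"
  assumes int: "integrable lborel (\<lambda>Y. H Y * E Y)" and E: "\<And>Y. E (Y + h) = - E Y"
  shows "integrable lborel (\<lambda>Y. vdiff h H Y * E Y)"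
    and "(\<integral>Y. H Y * E Y \<partial>lborel) = - (1/2) * (\<integral>Y. vdiff h H Y * E Y \<partial>lborel)"
proof -
  let ?F = "\<lambda>Y. H Y * E Y"
  have eq: "vdiff h H Y * E Y = - ?F (h + Y) - ?F Y" for Y
    by (simp add: vdiff_def E add.commute algebra_simps)
  have shifted: "integrable lborel (\<lambda>Y. ?F (h + Y))"
    by (rule integrable_lborel_translate[OF int])
  show "integrable lborel (\<lambda>Y. vdiff h H Y * E Y)"
    unfolding eq using shifted int by auto
  have "(\<integral>Y. vdiff h H Y * E Y \<partial>lborel) = - (\<integral>Y. ?F (h + Y) \<partial>lborel) - (\<integral>Y. ?F Y \<partial>lborel)"
    unfolding eq using shifted int by (simp add: Bochner_Integration.integral_diff)
  also have "\<dots> = - 2 * (\<integral>Y. ?F Y \<partial>lborel)"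
    using lborel_integral_translate[OF int] by simp
  finally show "(\<integral>Y. H Y * E Y \<partial>lborel) = - (1/2) * (\<integral>Y. vdiff h H Y * E Y \<partial>lborel)"
    by simp
qed

lemma integral_antiperiodic_funpow_vdiff:
  fixes H E :: "'a::euclidean_space \<Rightarrow> complex"
  assumes "integrable lborel (\<lambda>Y. H Y * E Y)" and "\<And>Y. E (Y + h) = - E Y"
  shows "integrable lborel (\<lambda>Y. (vdiff h ^^ N) H Y * E Y) \<and>
    (\<integral>Y. H Y * E Y \<partial>lborel) = (- (1/2)) ^ N * (\<integral>Y. (vdiff h ^^ N) H Y * E Y \<partial>lborel)"
  using assms(1)
proof (induction N arbitrary: H)
  case 0
  then show ?case by simp
next
  case (Suc N)
  have "(vdiff h ^^ Suc N) H = (vdiff h ^^ N) (vdiff h H)"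
    by (simp only: funpow_Suc_right o_apply)
  with Suc.IH[OF integral_antiperiodic_vdiff(1)[OF Suc.prems assms(2)]]
    integral_antiperiodic_vdiff(2)[OF Suc.prems assms(2)]
  show ?case by simp
qed

lemma funpow_vdiff_along_line:
  "(vdiff (c *\<^sub>R v) ^^ N) H (Y + t *\<^sub>R v) = (fdiff c ^^ N) (\<lambda>s. H (Y + s *\<^sub>R v)) t"
proof (induction N arbitrary: H t)
  case 0
  then show ?case by simp
next
  case (Suc N)
  have "(\<lambda>s. vdiff (c *\<^sub>R v) H (Y + s *\<^sub>R v)) = fdiff c (\<lambda>s. H (Y + s *\<^sub>R v))"
    by (auto simp: fun_eq_iff vdiff_def fdiff_def algebra_simps)
  then show ?case
    by (simp only: funpow_Suc_right o_apply Suc.IH)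
qed

lemma exp_neg_norm_sq_vec: "exp (- (norm (Y :: real ^ 'n::finite))\<^sup>2) = (\<Prod>l\<in>UNIV. exp (- (Y $ l)\<^sup>2))"
  by (simp add: norm_vec_def L2_set_def sum_nonneg exp_sum flip: sum_negf)

definition gauss_weight :: "('n::finite \<Rightarrow> nat) \<Rightarrow> real ^ 'n \<Rightarrow> real ^ 'n \<Rightarrow> real" where
  "gauss_weight \<gamma> Z Y = mpow (Y + Z) \<gamma> * exp (- (norm Y)\<^sup>2)"

definition weighted :: "('n::finite \<Rightarrow> nat) \<Rightarrow> (real ^ 'n \<Rightarrow> complex) \<Rightarrow> real ^ 'n \<Rightarrow> real ^ 'n \<Rightarrow> complex" where
  "weighted \<gamma> f Z Y = of_real (gauss_weight \<gamma> Z Y) * f (Z + Y)"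

definition weight_bound :: "('n::finite \<Rightarrow> nat) \<Rightarrow> real ^ 'n \<Rightarrow> real" where
  "weight_bound \<gamma> Z = (\<Prod>l\<in>UNIV. (1 + norm Z) ^ \<gamma> l * exp (real (\<gamma> l) ^ 2 / 2))"

lemma weight_bound_nonneg: "0 \<le> weight_bound \<gamma> Z"
  by (simp add: weight_bound_def prod_nonneg)

definition gauss_const :: "('n::finite \<Rightarrow> nat) \<Rightarrow> real" where
  "gauss_const \<gamma> = (\<Prod>l\<in>UNIV. exp (real (\<gamma> l) ^ 2 / 2)) * (\<integral>Y. quarter_gauss (Y :: real ^ 'n) \<partial>lborel)"

lemma gauss_const_nonneg: "0 \<le> gauss_const \<gamma>"
  unfolding gauss_const_def
  by (intro mult_nonneg_nonneg prod_nonneg integral_nonneg_AE) (auto simp: quarter_gauss_nonneg)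

lemma weight_bound_mult_integral_quarter_gauss:
  fixes \<gamma> :: "'n::finite \<Rightarrow> nat"
  shows "weight_bound \<gamma> Z * (\<integral>Y. quarter_gauss (Y :: real ^ 'n) \<partial>lborel) =
    (1 + norm Z) ^ sum \<gamma> UNIV * gauss_const \<gamma>"
proof -
  have "weight_bound \<gamma> Z = (1 + norm Z) ^ sum \<gamma> UNIV * (\<Prod>l\<in>UNIV. exp (real (\<gamma> l) ^ 2 / 2))"
    by (simp add: weight_bound_def prod.distrib power_sum)
  then show ?thesis by (simp add: gauss_const_def mult.assoc)
qed

lemma weight_bound_mult_quarter_gauss:
  "weight_bound \<gamma> Z * quarter_gauss Y =
    (\<Prod>l\<in>UNIV. ((1 + norm Z) ^ \<gamma> l * exp (real (\<gamma> l) ^ 2 / 2)) * exp (- (Y $ l)\<^sup>2 / 4))"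
  by (simp add: weight_bound_def quarter_gauss_def prod.distrib)

lemma abs_gauss_weight_le: "\<bar>gauss_weight \<gamma> Z Y\<bar> \<le> weight_bound \<gamma> Z * quarter_gauss Y"
proof -
  have "\<bar>gauss_weight \<gamma> Z Y\<bar> = (\<Prod>l\<in>UNIV. \<bar>Y $ l + Z $ l\<bar> ^ \<gamma> l * exp (- (Y $ l)\<^sup>2))"
    by (simp add: gauss_weight_def mpow_def exp_neg_norm_sq_vec abs_mult abs_prod power_abs
        prod.distrib)
  also have "\<dots> \<le> weight_bound \<gamma> Z * quarter_gauss Y"
    unfolding weight_bound_mult_quarter_gauss
    by (intro prod_mono conjI power_abs_add_mult_gauss_le component_le_norm_cart) auto
  finally show ?thesis .
qed

lemma norm_weighted_le:
  assumes "\<And>x. cmod (f x) \<le> S"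
  shows "cmod (weighted \<gamma> f Z Y) \<le> S * (weight_bound \<gamma> Z * quarter_gauss Y)"
proof -
  have "cmod (weighted \<gamma> f Z Y) = \<bar>gauss_weight \<gamma> Z Y\<bar> * cmod (f (Z + Y))"
    by (simp add: weighted_def norm_mult)
  also have "\<dots> \<le> (weight_bound \<gamma> Z * quarter_gauss Y) * S"
    by (intro mult_mono abs_gauss_weight_le assms)
      (auto intro: mult_nonneg_nonneg weight_bound_nonneg quarter_gauss_nonneg)
  finally show ?thesis by (simp add: mult.commute)
qed

lemma weighted_along_axis:
  fixes Y Z :: "real ^ 'n::finite"
  shows "weighted \<gamma> f Z (Y + t *\<^sub>R axis k 1) =
    of_real (\<Prod>l\<in>UNIV - {k}. (Y $ l + Z $ l) ^ \<gamma> l * exp (- (Y $ l)\<^sup>2)) *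
    of_real (gauss_shift_deriv (\<gamma> k) (Z $ k) 0 (Y $ k + t)) * f ((Z + Y) + t *\<^sub>R axis k 1)"
proof -
  let ?Yt = "Y + t *\<^sub>R axis k 1"
  have "gauss_weight \<gamma> Z ?Yt = (\<Prod>l\<in>UNIV. (?Yt $ l + Z $ l) ^ \<gamma> l * exp (- (?Yt $ l)\<^sup>2))"
    by (simp add: gauss_weight_def mpow_def exp_neg_norm_sq_vec prod.distrib)
  also have "\<dots> = ((?Yt $ k + Z $ k) ^ \<gamma> k * exp (- (?Yt $ k)\<^sup>2)) *
       (\<Prod>l\<in>UNIV - {k}. (?Yt $ l + Z $ l) ^ \<gamma> l * exp (- (?Yt $ l)\<^sup>2))"
    by (rule prod.remove) auto
  also have "(\<Prod>l\<in>UNIV - {k}. (?Yt $ l + Z $ l) ^ \<gamma> l * exp (- (?Yt $ l)\<^sup>2))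
      = (\<Prod>l\<in>UNIV - {k}. (Y $ l + Z $ l) ^ \<gamma> l * exp (- (Y $ l)\<^sup>2))"
    by (rule prod.cong) (auto simp: axis_def)
  also have "(?Yt $ k + Z $ k) ^ \<gamma> k * exp (- (?Yt $ k)\<^sup>2) =
      gauss_shift_deriv (\<gamma> k) (Z $ k) 0 (Y $ k + t)"
    by (simp add: gauss_shift_deriv_0 axis_def)
  finally show ?thesis
    by (simp add: weighted_def add.assoc mult.commute mult.left_commute)
qed

lemma abs_prod_remove_mult_le_weight_bound:
  fixes Y Z :: "real ^ 'n::finite"
  shows "\<bar>\<Prod>l\<in>UNIV - {k}. (Y $ l + Z $ l) ^ \<gamma> l * exp (- (Y $ l)\<^sup>2)\<bar> *
      ((1 + \<bar>Z $ k\<bar>) ^ \<gamma> k * exp (- (Y $ k)\<^sup>2 / 4)) \<le> weight_bound \<gamma> Z * quarter_gauss Y"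
proof -
  define b where "b l = ((1 + norm Z) ^ \<gamma> l * exp (real (\<gamma> l) ^ 2 / 2)) * exp (- (Y $ l)\<^sup>2 / 4)"
    for l
  have "\<bar>\<Prod>l\<in>UNIV - {k}. (Y $ l + Z $ l) ^ \<gamma> l * exp (- (Y $ l)\<^sup>2)\<bar> \<le> (\<Prod>l\<in>UNIV - {k}. b l)"
    unfolding abs_prod b_def
    by (intro prod_mono conjI order.trans[OF _ power_abs_add_mult_gauss_le[OF component_le_norm_cart]])
      (auto simp: abs_mult power_abs)
  moreover have "(1 + \<bar>Z $ k\<bar>) ^ \<gamma> k * exp (- (Y $ k)\<^sup>2 / 4) \<le> b k"
  proof -
    have "(1 + \<bar>Z $ k\<bar>) ^ \<gamma> k \<le> (1 + norm Z) ^ \<gamma> k * 1"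
      by (simp add: power_mono component_le_norm_cart)
    also have "\<dots> \<le> (1 + norm Z) ^ \<gamma> k * exp (real (\<gamma> k) ^ 2 / 2)"
      by (intro mult_left_mono) auto
    finally show ?thesis unfolding b_def by simp
  qed
  ultimately have "\<bar>\<Prod>l\<in>UNIV - {k}. (Y $ l + Z $ l) ^ \<gamma> l * exp (- (Y $ l)\<^sup>2)\<bar> *
      ((1 + \<bar>Z $ k\<bar>) ^ \<gamma> k * exp (- (Y $ k)\<^sup>2 / 4)) \<le> (\<Prod>l\<in>UNIV - {k}. b l) * b k"
    by (intro mult_mono) (auto simp: b_def prod_nonneg)
  also have "\<dots> = weight_bound \<gamma> Z * quarter_gauss Y"
    unfolding weight_bound_mult_quarter_gauss b_def by (simp add: prod.remove[of UNIV k] mult.commute)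
  finally show ?thesis .
qed

text \<open>The \<open>j\<close>-th derivative of \<open>t \<mapsto> weighted \<gamma> f Z (Y + t e_k)\<close>, by the Leibniz rule.\<close>

definition weighted_axis_deriv ::
    "('n::finite \<Rightarrow> nat) \<Rightarrow> (real ^ 'n \<Rightarrow> complex) \<Rightarrow> real ^ 'n \<Rightarrow> real ^ 'n \<Rightarrow> 'n \<Rightarrow> nat \<Rightarrow> real \<Rightarrow> complex"
  where "weighted_axis_deriv \<gamma> f Z Y k j t =
    of_real (\<Prod>l\<in>UNIV - {k}. (Y $ l + Z $ l) ^ \<gamma> l * exp (- (Y $ l)\<^sup>2)) *
    (\<Sum>i\<le>j. of_nat (j choose i) * of_real (gauss_shift_deriv (\<gamma> k) (Z $ k) i (Y $ k + t)) *
      dpartial (replicate (j - i) k) f ((Z + Y) + t *\<^sub>R axis k 1))"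

lemma weighted_axis_deriv_0:
  "weighted_axis_deriv \<gamma> f Z Y k 0 t = weighted \<gamma> f Z (Y + t *\<^sub>R axis k 1)"
  by (simp add: weighted_axis_deriv_def weighted_along_axis)

lemma has_vector_derivative_weighted_axis_deriv:
  fixes f :: "real ^ 'n::finite \<Rightarrow> complex"
  assumes "\<And>ks x. dpartial ks f differentiable (at x)"
  shows "(weighted_axis_deriv \<gamma> f Z Y k j has_vector_derivative
    weighted_axis_deriv \<gamma> f Z Y k (Suc j) t) (at t)"
proof -
  have "((\<lambda>t. complex_of_real (gauss_shift_deriv (\<gamma> k) (Z $ k) i (Y $ k + t))) has_vector_derivative
      complex_of_real (gauss_shift_deriv (\<gamma> k) (Z $ k) (Suc i) (Y $ k + t))) (at t)" for i t
  proof -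
    have "((\<lambda>t. Y $ k + t) has_real_derivative 1) (at t)" by (auto intro!: derivative_eq_intros)
    from DERIV_chain2[OF has_real_derivative_gauss_shift_deriv this] show ?thesis
      by (rule has_vector_derivative_of_real[THEN has_vector_derivative_eq_rhs]) simp
  qed
  then show ?thesis
    unfolding weighted_axis_deriv_def
    by (intro has_vector_derivative_mult_right has_vector_derivative_leibniz_sum
        has_vector_derivative_dpartial_replicate assms)
qed

lemma norm_weighted_axis_deriv_le:
  fixes f :: "real ^ 'n::finite \<Rightarrow> complex"
  assumes f_bound: "\<And>i x. i \<le> j \<Longrightarrow> cmod (dpartial (replicate i k) f x) \<le> S"
    and K: "\<forall>a\<le>A. \<forall>i\<le>j. \<forall>z s. \<bar>gauss_shift_deriv a z i s\<bar> \<le> K * (1 + \<bar>z\<bar>) ^ a * exp (- s\<^sup>2 / 2)"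
    and "\<gamma> k \<le> A" "0 \<le> K" "\<bar>t\<bar> \<le> r"
  shows "cmod (weighted_axis_deriv \<gamma> f Z Y k j t) \<le>
    S * 2 ^ j * K * exp (r\<^sup>2 / 2) * (weight_bound \<gamma> Z * quarter_gauss Y)"
proof -
  define a where "a = \<gamma> k"
  define z where "z = Z $ k"
  define P where "P = (\<Prod>l\<in>UNIV - {k}. (Y $ l + Z $ l) ^ \<gamma> l * exp (- (Y $ l)\<^sup>2))"
  have "cmod (dpartial (replicate 0 k) f Y) \<le> S" by (rule f_bound) simp
  then have "S \<ge> 0" by (meson norm_ge_zero order.trans)
  let ?L = "\<Sum>i\<le>j. of_nat (j choose i) * of_real (gauss_shift_deriv a z i (Y $ k + t)) *
        dpartial (replicate (j - i) k) f ((Z + Y) + t *\<^sub>R axis k 1)"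
  have "cmod ?L \<le> 2 ^ j * (K * (1 + \<bar>z\<bar>) ^ a * exp (- (Y $ k + t)\<^sup>2 / 2)) * S"
    by (rule norm_leibniz_sum_le) (use K f_bound \<open>\<gamma> k \<le> A\<close> in \<open>auto simp: a_def\<close>)
  also have "\<dots> \<le> 2 ^ j * (K * (1 + \<bar>z\<bar>) ^ a * (exp (r\<^sup>2 / 2) * exp (- (Y $ k)\<^sup>2 / 4))) * S"
    by (intro mult_left_mono mult_right_mono exp_shifted_square_le \<open>\<bar>t\<bar> \<le> r\<close>)
      (use \<open>0 \<le> K\<close> \<open>S \<ge> 0\<close> in auto)
  finally have L_bound: "cmod ?L \<le> \<dots>" .
  have "cmod (weighted_axis_deriv \<gamma> f Z Y k j t) = \<bar>P\<bar> * cmod ?L"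
    by (simp only: weighted_axis_deriv_def norm_mult norm_of_real P_def a_def z_def)
  also have "\<dots> \<le> \<bar>P\<bar> * (2 ^ j * (K * (1 + \<bar>z\<bar>) ^ a * (exp (r\<^sup>2 / 2) * exp (- (Y $ k)\<^sup>2 / 4))) * S)"
    by (rule mult_left_mono[OF L_bound]) simp
  also have "\<dots> = (S * 2 ^ j * K * exp (r\<^sup>2 / 2)) * (\<bar>P\<bar> * ((1 + \<bar>z\<bar>) ^ a * exp (- (Y $ k)\<^sup>2 / 4)))"
    by (simp add: mult_ac)
  also have "\<dots> \<le> (S * 2 ^ j * K * exp (r\<^sup>2 / 2)) * (weight_bound \<gamma> Z * quarter_gauss Y)"
    unfolding P_def a_def z_def
    by (intro mult_left_mono abs_prod_remove_mult_le_weight_bound) (use \<open>0 \<le> K\<close> \<open>S \<ge> 0\<close> in auto)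
  finally show ?thesis .
qed

lemma norm_funpow_vdiff_weighted_le:
  fixes f :: "real ^ 'n::finite \<Rightarrow> complex" and Z Y :: "real ^ 'n"
  assumes f_diff: "\<And>ks x. dpartial ks f differentiable (at x)"
    and f_bound: "\<And>j x. j \<le> N \<Longrightarrow> cmod (dpartial (replicate j k) f x) \<le> S"
    and K: "\<forall>a\<le>A. \<forall>i\<le>N. \<forall>z s. \<bar>gauss_shift_deriv a z i s\<bar> \<le> K * (1 + \<bar>z\<bar>) ^ a * exp (- s\<^sup>2 / 2)"
    and "\<gamma> k \<le> A" "0 \<le> K" "\<bar>c\<bar> \<le> 1"
  shows "cmod ((vdiff (c *\<^sub>R axis k 1) ^^ N) (weighted \<gamma> f Z) Y)
     \<le> \<bar>c\<bar> ^ N * (S * 2 ^ N * K * exp (real N ^ 2 / 2) * (weight_bound \<gamma> Z * quarter_gauss Y))"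
proof -
  let ?g = "weighted_axis_deriv \<gamma> f Z Y k"
  have "?g 0 = (\<lambda>t. weighted \<gamma> f Z (Y + t *\<^sub>R axis k 1))"
    by (rule ext) (rule weighted_axis_deriv_0)
  then have "(vdiff (c *\<^sub>R axis k 1) ^^ N) (weighted \<gamma> f Z) Y = (fdiff c ^^ N) (?g 0) 0"
    using funpow_vdiff_along_line[where c = c and v = "axis k 1" and H = "weighted \<gamma> f Z" and t = 0]
    by simp
  also have "cmod \<dots> \<le> \<bar>c\<bar> ^ N *
      (S * 2 ^ N * K * exp (real N ^ 2 / 2) * (weight_bound \<gamma> Z * quarter_gauss Y))"
  proof (rule norm_funpow_fdiff_le)
    show "(?g j has_vector_derivative ?g (Suc j) t) (at t)" for j t
      by (rule has_vector_derivative_weighted_axis_deriv[OF f_diff])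
    fix s assume "s \<in> closed_segment 0 (0 + real N * c)"
    moreover have "\<bar>real N * c\<bar> \<le> real N"
      using \<open>\<bar>c\<bar> \<le> 1\<close> by (simp add: abs_mult mult_left_le)
    ultimately have "\<bar>s\<bar> \<le> real N"
      by (auto simp: closed_segment_eq_real_ivl split: if_splits)
    then show "cmod (?g N s) \<le> S * 2 ^ N * K * exp (real N ^ 2 / 2) * (weight_bound \<gamma> Z * quarter_gauss Y)"
      by (intro norm_weighted_axis_deriv_le f_bound K) (use assms in auto)
  qed
  finally show ?thesis .
qed

definition phase :: "real ^ 'n::finite \<Rightarrow> real ^ 'n \<Rightarrow> complex" where
  "phase w Y = exp (- \<i> * complex_of_real (w \<bullet> Y))"

lemma norm_phase [simp]: "cmod (phase w Y) = 1"
  by (simp add: phase_def)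

lemma phase_add_half_period:
  assumes "w $ k \<noteq> 0"
  shows "phase w (Y + (pi / w $ k) *\<^sub>R axis k 1) = - phase w Y"
proof -
  have "w \<bullet> (Y + (pi / w $ k) *\<^sub>R axis k 1) = w \<bullet> Y + pi"
    using assms by (simp add: inner_add_right inner_axis)
  then have "phase w (Y + (pi / w $ k) *\<^sub>R axis k 1) = phase w Y * exp (- (\<i> * of_real pi))"
    by (simp add: phase_def algebra_simps flip: exp_add)
  then show ?thesis by (simp add: exp_minus)
qed

lemma integrable_weighted_phase:
  fixes f :: "real ^ 'n::finite \<Rightarrow> complex"
  assumes "\<And>x. f differentiable (at x)" and "\<And>x. cmod (f x) \<le> S"
  shows "integrable lborel (\<lambda>Y. weighted \<gamma> f Z Y * phase w Y)"
proof (rule Bochner_Integration.integrable_bound)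
  show "integrable lborel (\<lambda>Y. S * weight_bound \<gamma> Z * quarter_gauss Y)"
    by (intro integrable_mult_right integrable_quarter_gauss)
  have "continuous_on UNIV f"
    using assms(1) by (simp add: continuous_at_imp_continuous_on differentiable_imp_continuous_within)
  then have "continuous_on UNIV (\<lambda>Y. f (Z + Y))"
    by (rule continuous_on_compose2) (auto intro!: continuous_intros)
  then have "continuous_on UNIV (\<lambda>Y. weighted \<gamma> f Z Y * phase w Y)"
    unfolding weighted_def gauss_weight_def mpow_def phase_def by (intro continuous_intros) auto
  then show "(\<lambda>Y. weighted \<gamma> f Z Y * phase w Y) \<in> borel_measurable lborel"
    using borel_measurable_continuous_onI by simp
  have "S \<ge> 0" using assms(2) by (meson norm_ge_zero order.trans)
  show "AE Y in lborel. norm (weighted \<gamma> f Z Y * phase w Y) \<le> norm (S * weight_bound \<gamma> Z * quarter_gauss Y)"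
  proof (intro AE_I2)
    fix Y
    have "cmod (weighted \<gamma> f Z Y) \<le> S * (weight_bound \<gamma> Z * quarter_gauss Y)"
      by (rule norm_weighted_le) (rule assms(2))
    then show "norm (weighted \<gamma> f Z Y * phase w Y) \<le> norm (S * weight_bound \<gamma> Z * quarter_gauss Y)"
      using \<open>S \<ge> 0\<close> weight_bound_nonneg[of \<gamma> Z] quarter_gauss_nonneg[of Y]
      by (simp add: norm_mult abs_mult mult.assoc)
  qed
qed

text \<open>Since \<open>w \<bullet> Z = 0\<close>, translating by \<open>Z\<close> leaves the oscillatory factor unchanged.\<close>

lemma integral_eq_integral_weighted_phase:
  fixes f :: "real ^ 'n::finite \<Rightarrow> complex" and Z w :: "real ^ 'n"
  assumes "\<And>x. f differentiable (at x)" and "\<And>x. cmod (f x) \<le> S" and "w \<bullet> Z = 0"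
  shows "integral UNIV (\<lambda>X. of_real (mpow X \<gamma>) * f X *
      exp (complex_of_real (- (norm (X - Z))\<^sup>2) - \<i> * complex_of_real (w \<bullet> X)))
    = (\<integral>Y. weighted \<gamma> f Z Y * phase w Y \<partial>lborel)" (is "integral UNIV ?F = _")
proof -
  have shift: "?F (Z + Y) = weighted \<gamma> f Z Y * phase w Y" for Y
  proof -
    have "complex_of_real (- (norm ((Z + Y) - Z))\<^sup>2) - \<i> * complex_of_real (w \<bullet> (Z + Y))
        = complex_of_real (- (norm Y)\<^sup>2) + (- \<i> * complex_of_real (w \<bullet> Y))"
      using assms(3) by (simp add: inner_add_right)
    then have "exp (complex_of_real (- (norm ((Z + Y) - Z))\<^sup>2) - \<i> * complex_of_real (w \<bullet> (Z + Y)))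
        = complex_of_real (exp (- (norm Y)\<^sup>2)) * phase w Y"
      by (simp only: exp_add phase_def exp_of_real)
    then show ?thesis
      by (simp add: weighted_def gauss_weight_def add.commute mult_ac)
  qed
  have "integrable lborel (\<lambda>Y. ?F (Z + Y))"
    unfolding shift by (rule integrable_weighted_phase[OF assms(1,2)])
  from integrable_lborel_translate[OF this, of "- Z"] have "integrable lborel ?F" by simp
  then show ?thesis
    using integral_lborel lborel_integral_translate[of ?F Z] shift by simp
qed

section \<open>Decay of the integral\<close>

lemma norm_integral_weighted_phase_le:
  fixes f :: "real ^ 'n::finite \<Rightarrow> complex"
  assumes "\<And>x. f differentiable (at x)" and "\<And>x. cmod (f x) \<le> S"
  shows "cmod (\<integral>Y. weighted \<gamma> f Z Y * phase w Y \<partial>lborel) \<le>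
    S * weight_bound \<gamma> Z * (\<integral>Y. quarter_gauss (Y :: real ^ 'n) \<partial>lborel)"
proof -
  have "cmod (\<integral>Y. weighted \<gamma> f Z Y * phase w Y \<partial>lborel) \<le>
      (\<integral>Y. S * weight_bound \<gamma> Z * quarter_gauss (Y :: real ^ 'n) \<partial>lborel)"
  proof (rule Bochner_Integration.integral_norm_bound_integral)
    show "integrable lborel (\<lambda>Y. weighted \<gamma> f Z Y * phase w Y)"
      by (rule integrable_weighted_phase) (rule assms)+
    show "integrable lborel (\<lambda>Y. S * weight_bound \<gamma> Z * quarter_gauss Y)"
      by (intro integrable_mult_right integrable_quarter_gauss)
    show "cmod (weighted \<gamma> f Z Y * phase w Y) \<le> S * weight_bound \<gamma> Z * quarter_gauss Y" for Y
      using norm_weighted_le[of f S \<gamma> Z Y] assms(2) by (simp add: norm_mult mult.assoc)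
  qed
  then show ?thesis by simp
qed

text \<open>Integrating \<open>N\<close> times by differences against the half period of the phase in
  direction \<open>k\<close> gains the factor \<open>|c|^N\<close>, where \<open>c = \<pi> / w$k\<close>.\<close>

lemma norm_integral_weighted_phase_le_half_period:
  fixes f :: "real ^ 'n::finite \<Rightarrow> complex"
  assumes f_diff: "\<And>ks x. dpartial ks f differentiable (at x)"
    and f_bound: "\<And>j x. j \<le> N \<Longrightarrow> cmod (dpartial (replicate j k) f x) \<le> S"
    and K: "\<forall>a\<le>A. \<forall>i\<le>N. \<forall>z s. \<bar>gauss_shift_deriv a z i s\<bar> \<le> K * (1 + \<bar>z\<bar>) ^ a * exp (- s\<^sup>2 / 2)"
    and "\<gamma> k \<le> A" "0 \<le> K"
    and "w $ k \<noteq> 0" "pi / \<bar>w $ k\<bar> \<le> 1"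
  shows "cmod (\<integral>Y. weighted \<gamma> f Z Y * phase w Y \<partial>lborel) \<le>
    (pi / \<bar>w $ k\<bar>) ^ N * (S * K * exp (real N ^ 2 / 2) * weight_bound \<gamma> Z *
      (\<integral>Y. quarter_gauss (Y :: real ^ 'n) \<partial>lborel))"
proof -
  define c where "c = pi / w $ k"
  define D where "D = (vdiff (c *\<^sub>R axis k 1) ^^ N) (weighted \<gamma> f Z)"
  define M where "M = \<bar>c\<bar> ^ N * (S * 2 ^ N * K * exp (real N ^ 2 / 2) * weight_bound \<gamma> Z)"
  have "\<bar>c\<bar> = pi / \<bar>w $ k\<bar>" by (simp add: c_def)
  have f_diff0: "\<And>x. f differentiable (at x)" and f_bound0: "\<And>x. cmod (f x) \<le> S"
    using f_diff[of "[]"] f_bound[of 0] by simp_all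
  have "phase w (Y + c *\<^sub>R axis k 1) = - phase w Y" for Y
    unfolding c_def using \<open>w $ k \<noteq> 0\<close> by (rule phase_add_half_period)
  then have "integrable lborel (\<lambda>Y. D Y * phase w Y) \<and>
      (\<integral>Y. weighted \<gamma> f Z Y * phase w Y \<partial>lborel) = (- (1/2)) ^ N * (\<integral>Y. D Y * phase w Y \<partial>lborel)"
    unfolding D_def
    by (intro integral_antiperiodic_funpow_vdiff integrable_weighted_phase[OF f_diff0 f_bound0])
  then have int_D: "integrable lborel (\<lambda>Y. D Y * phase w Y)"
    and eq: "(\<integral>Y. weighted \<gamma> f Z Y * phase w Y \<partial>lborel) =
      (- (1/2)) ^ N * (\<integral>Y. D Y * phase w Y \<partial>lborel)"
    by blast+
  have D_bound: "cmod (\<integral>Y. D Y * phase w Y \<partial>lborel) \<le> (\<integral>Y. M * quarter_gauss (Y :: real ^ 'n) \<partial>lborel)"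
  proof (rule Bochner_Integration.integral_norm_bound_integral[OF int_D])
    show "integrable lborel (\<lambda>Y. M * quarter_gauss (Y :: real ^ 'n))"
      by (intro integrable_mult_right integrable_quarter_gauss)
    fix Y
    have "cmod (D Y) \<le> \<bar>c\<bar> ^ N * (S * 2 ^ N * K * exp (real N ^ 2 / 2) *
        (weight_bound \<gamma> Z * quarter_gauss Y))"
      unfolding D_def
      by (rule norm_funpow_vdiff_weighted_le[OF f_diff f_bound K])
        (use assms \<open>\<bar>c\<bar> = pi / \<bar>w $ k\<bar>\<close> in auto)
    then show "cmod (D Y * phase w Y) \<le> M * quarter_gauss Y"
      by (simp add: norm_mult M_def mult_ac)
  qed
  have "cmod (\<integral>Y. weighted \<gamma> f Z Y * phase w Y \<partial>lborel) =
      (1/2) ^ N * cmod (\<integral>Y. D Y * phase w Y \<partial>lborel)"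
    unfolding eq by (simp add: norm_mult norm_power)
  also have "\<dots> \<le> (1/2) ^ N * (\<integral>Y. M * quarter_gauss (Y :: real ^ 'n) \<partial>lborel)"
    by (rule mult_left_mono[OF D_bound]) simp
  also have "(\<integral>Y. M * quarter_gauss (Y :: real ^ 'n) \<partial>lborel) =
      2 ^ N * (\<bar>c\<bar> ^ N * (S * K * exp (real N ^ 2 / 2) * weight_bound \<gamma> Z *
        (\<integral>Y. quarter_gauss (Y :: real ^ 'n) \<partial>lborel)))"
    by (simp add: M_def mult_ac)
  also have "(1/2) ^ N * (2 ^ N * x) = (x::real)" for x
    by (simp add: power_one_over)
  finally show ?thesis
    unfolding \<open>\<bar>c\<bar> = pi / \<bar>w $ k\<bar>\<close> .
qed

lemma ex_coordinate_norm_le: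
  fixes w :: "real ^ 'n::finite"
  shows "\<exists>k. norm w \<le> sqrt (real CARD('n)) * \<bar>w $ k\<bar>"
proof -
  have "Max (range (\<lambda>l. \<bar>w $ l\<bar>)) \<in> range (\<lambda>l. \<bar>w $ l\<bar>)"
    by (rule Max_in) auto
  then obtain k where k: "\<bar>w $ k\<bar> = Max (range (\<lambda>l. \<bar>w $ l\<bar>))"
    by (metis rangeE)
  have "(norm w)\<^sup>2 = (\<Sum>l\<in>UNIV. (w $ l)\<^sup>2)"
    by (simp only: power2_norm_eq_inner inner_vec_def) (simp add: power2_eq_square)
  also have "\<dots> \<le> (\<Sum>l\<in>(UNIV::'n set). (w $ k)\<^sup>2)"
  proof (rule sum_mono)
    fix l :: 'n
    have "\<bar>w $ l\<bar> \<le> \<bar>w $ k\<bar>" unfolding k by (rule Max_ge) auto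
    then show "(w $ l)\<^sup>2 \<le> (w $ k)\<^sup>2" by (simp add: abs_le_square_iff)
  qed
  also have "\<dots> = (sqrt (real CARD('n)) * \<bar>w $ k\<bar>)\<^sup>2"
    by (simp add: power_mult_distrib)
  finally have "norm w \<le> sqrt (real CARD('n)) * \<bar>w $ k\<bar>"
    by (rule power2_le_imp_le) simp
  then show ?thesis ..
qed

lemma power_le_powr_of_le:
  fixes P Q :: real
  assumes "1 \<le> P" "P \<le> Q"
  shows "P ^ g \<le> Q ^ (m + g) * P powr (- real m)"
proof -
  have "P ^ m * P ^ g \<le> Q ^ (m + g)"
    using assms by (metis power_add power_mono order.trans zero_le_one)
  then show ?thesis
    using assms(1) by (simp add: powr_minus powr_realpow field_simps)
qed

lemma power_add_mult_power_le_powr: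
  fixes x a P :: real
  assumes "0 \<le> x" "x \<le> a / P" "1 \<le> P"
  shows "x ^ (m + g) * P ^ g \<le> a ^ (m + g) * P powr (- real m)"
proof -
  have "x ^ (m + g) * P ^ g \<le> (a / P) ^ (m + g) * P ^ g"
    using assms by (intro mult_right_mono power_mono) auto
  also have "\<dots> = a ^ (m + g) * P powr (- real m)"
    using assms(3) by (simp add: power_divide power_add powr_minus powr_realpow field_simps)
  finally show ?thesis .
qed

lemma pi_div_le_of_norm_le:
  fixes W z r :: real
  assumes "z \<le> r * W" "pi * r + 1 < z" "1 \<le> r"
  shows "pi < W" "pi / W \<le> 1" "pi / W \<le> 2 * pi * r / (1 + z)"
proof -
  have "0 \<le> pi * r" using \<open>1 \<le> r\<close> by simp
  then have "r * pi < r * W" using assms(1,2) by (simp add: mult.commute)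
  then show "pi < W" using \<open>1 \<le> r\<close> by simp
  moreover have "0 < W" using \<open>pi < W\<close> pi_gt_zero by linarith
  ultimately show "pi / W \<le> 1" by (simp add: divide_le_eq_1)
  have "1 + z \<le> 2 * (r * W)" using assms(1,2) \<open>0 \<le> pi * r\<close> by simp
  have "pi / W = (2 * pi * r) / (2 * (r * W))" using \<open>1 \<le> r\<close> by simp
  also have "\<dots> \<le> (2 * pi * r) / (1 + z)"
    using \<open>1 + z \<le> 2 * (r * W)\<close> \<open>0 \<le> pi * r\<close> \<open>pi < W\<close> assms(2)
    by (intro divide_left_mono) (auto intro!: mult_pos_pos)
  finally show "pi / W \<le> 2 * pi * r / (1 + z)" .
qed

lemma norm_integral_weighted_phase_near:
  fixes f :: "real ^ 'n::finite \<Rightarrow> complex"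
  assumes "\<And>x. f differentiable (at x)" and "\<And>x. cmod (f x) \<le> S" and "norm Z \<le> R"
  shows "cmod (\<integral>Y. weighted \<gamma> f Z Y * phase w Y \<partial>lborel) \<le>
    (1 + R) ^ (m + sum \<gamma> UNIV) * gauss_const \<gamma> * (1 + norm Z) powr (- real m) * S"
proof -
  have "S \<ge> 0" using assms(2) by (meson norm_ge_zero order.trans)
  have "cmod (\<integral>Y. weighted \<gamma> f Z Y * phase w Y \<partial>lborel) \<le>
      S * weight_bound \<gamma> Z * (\<integral>Y. quarter_gauss (Y :: real ^ 'n) \<partial>lborel)"
    by (rule norm_integral_weighted_phase_le[OF assms(1,2)])
  also have "\<dots> = S * ((1 + norm Z) ^ sum \<gamma> UNIV * gauss_const \<gamma>)"
    by (simp only: mult.assoc weight_bound_mult_integral_quarter_gauss)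
  also have "\<dots> \<le> S * ((1 + R) ^ (m + sum \<gamma> UNIV) * (1 + norm Z) powr (- real m) * gauss_const \<gamma>)"
    using assms(3) \<open>S \<ge> 0\<close> gauss_const_nonneg
    by (intro mult_left_mono mult_right_mono power_le_powr_of_le) auto
  finally show ?thesis by (simp add: mult_ac)
qed

lemma norm_integral_weighted_phase_far:
  fixes f :: "real ^ 'n::finite \<Rightarrow> complex" and Z w :: "real ^ 'n" and \<gamma> :: "'n \<Rightarrow> nat"
    and m :: nat
  defines "N \<equiv> m + sum \<gamma> UNIV" and "r \<equiv> sqrt (real CARD('n))"
  assumes f_diff: "\<And>ks x. dpartial ks f differentiable (at x)"
    and f_bound: "\<And>j k x. j \<le> N \<Longrightarrow> cmod (dpartial (replicate j k) f x) \<le> S"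
    and K: "\<forall>a\<le>sum \<gamma> UNIV. \<forall>i\<le>N. \<forall>z s. \<bar>gauss_shift_deriv a z i s\<bar> \<le> K * (1 + \<bar>z\<bar>) ^ a * exp (- s\<^sup>2 / 2)"
    and "0 \<le> K" and "norm w = norm Z" and "pi * r + 1 < norm Z"
  shows "cmod (\<integral>Y. weighted \<gamma> f Z Y * phase w Y \<partial>lborel) \<le>
    (2 * pi * r) ^ N * K * exp (real N ^ 2 / 2) * gauss_const \<gamma> * (1 + norm Z) powr (- real m) * S"
proof -
  have "S \<ge> 0" using f_bound[of 0] by (meson norm_ge_zero order.trans le0)
  have "r \<ge> 1" by (simp add: r_def)
  obtain k where "norm w \<le> r * \<bar>w $ k\<bar>"
    using ex_coordinate_norm_le unfolding r_def by blast
  then have Z_le: "norm Z \<le> r * \<bar>w $ k\<bar>" using \<open>norm w = norm Z\<close> by simp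
  note c_bounds = pi_div_le_of_norm_le[OF Z_le \<open>pi * r + 1 < norm Z\<close> \<open>r \<ge> 1\<close>]
  have "w $ k \<noteq> 0" using c_bounds(1) pi_gt_zero by linarith
  have "cmod (\<integral>Y. weighted \<gamma> f Z Y * phase w Y \<partial>lborel) \<le> (pi / \<bar>w $ k\<bar>) ^ N *
      (S * K * exp (real N ^ 2 / 2) * weight_bound \<gamma> Z * (\<integral>Y. quarter_gauss (Y :: real ^ 'n) \<partial>lborel))"
  proof (rule norm_integral_weighted_phase_le_half_period[where A = "sum \<gamma> UNIV"])
    show "\<gamma> k \<le> sum \<gamma> UNIV" by (rule member_le_sum) auto
  qed (use f_diff f_bound K \<open>K \<ge> 0\<close> \<open>w $ k \<noteq> 0\<close> c_bounds(2) in auto)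
  also have "\<dots> = ((pi / \<bar>w $ k\<bar>) ^ N * (1 + norm Z) ^ sum \<gamma> UNIV) *
      (S * K * exp (real N ^ 2 / 2) * gauss_const \<gamma>)"
    by (simp only: mult.assoc weight_bound_mult_integral_quarter_gauss) (simp add: mult_ac)
  also have "\<dots> \<le> ((2 * pi * r) ^ N * (1 + norm Z) powr (- real m)) *
      (S * K * exp (real N ^ 2 / 2) * gauss_const \<gamma>)"
    unfolding N_def using c_bounds(3) \<open>S \<ge> 0\<close> \<open>K \<ge> 0\<close> gauss_const_nonneg
    by (intro mult_right_mono power_add_mult_power_le_powr mult_nonneg_nonneg) auto
  finally show ?thesis by (simp add: mult_ac)
qed

lemma norm_oscillatory_integral_decay:
  fixes \<gamma> :: "'n::finite \<Rightarrow> nat" and m :: nat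
  shows "\<exists>C. \<forall>(f :: real ^ 'n \<Rightarrow> complex) S Z w. (\<forall>ks x. dpartial ks f differentiable (at x)) \<longrightarrow>
     (\<forall>j k x. j \<le> m + sum \<gamma> UNIV \<longrightarrow> cmod (dpartial (replicate j k) f x) \<le> S) \<longrightarrow>
     w \<bullet> Z = 0 \<longrightarrow> norm w = norm Z \<longrightarrow>
     cmod (integral UNIV (\<lambda>X. of_real (mpow X \<gamma>) * f X *
        exp (complex_of_real (- (norm (X - Z))\<^sup>2) - \<i> * complex_of_real (w \<bullet> X))))
     \<le> C * (1 + norm Z) powr (- real m) * S"
proof -
  define N where "N = m + sum \<gamma> UNIV"
  define r where "r = sqrt (real CARD('n))"
  obtain K where "K \<ge> 0" and K: "\<forall>a\<le>sum \<gamma> UNIV. \<forall>i\<le>N. \<forall>z s.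
      \<bar>gauss_shift_deriv a z i s\<bar> \<le> K * (1 + \<bar>z\<bar>) ^ a * exp (- s\<^sup>2 / 2)"
    using gauss_shift_deriv_uniform_bound by blast
  define C_near where "C_near = (1 + (pi * r + 1)) ^ N * gauss_const \<gamma>"
  define C_far where "C_far = (2 * pi * r) ^ N * K * exp (real N ^ 2 / 2) * gauss_const \<gamma>"
  have "C_near \<ge> 0" "C_far \<ge> 0"
    using \<open>K \<ge> 0\<close> gauss_const_nonneg[of \<gamma>] by (auto simp: C_near_def C_far_def r_def)
  show ?thesis
  proof (intro exI[of _ "C_near + C_far"] allI impI)
    fix f :: "real ^ 'n \<Rightarrow> complex" and S and Z w :: "real ^ 'n"
    assume f_diff: "\<forall>ks x. dpartial ks f differentiable (at x)"
      and f_bound: "\<forall>j k x. j \<le> m + sum \<gamma> UNIV \<longrightarrow> cmod (dpartial (replicate j k) f x) \<le> S"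
      and "w \<bullet> Z = 0" and "norm w = norm Z"
    have f_diff0: "\<And>x. f differentiable (at x)" and f_bound0: "\<And>x. cmod (f x) \<le> S"
      using f_diff f_bound by (metis dpartial.simps(1), metis dpartial.simps(1) replicate_0 le0)
    then have "S \<ge> 0" by (meson norm_ge_zero order.trans)
    let ?J = "\<integral>Y. weighted \<gamma> f Z Y * phase w Y \<partial>lborel"
    let ?D = "(1 + norm Z) powr (- real m) * S"
    have "cmod ?J \<le> C_near * ?D \<or> cmod ?J \<le> C_far * ?D"
    proof (cases "norm Z \<le> pi * r + 1")
      case True
      then show ?thesis
        using norm_integral_weighted_phase_near[OF f_diff0 f_bound0, of Z "pi * r + 1" \<gamma> w m]
        by (simp add: C_near_def N_def mult.assoc)
    next
      case False
      then show ?thesis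
        using norm_integral_weighted_phase_far[of f m \<gamma> S K w Z] f_diff f_bound K \<open>K \<ge> 0\<close>
          \<open>norm w = norm Z\<close>
        by (simp add: C_far_def N_def r_def mult.assoc)
    qed
    moreover have "0 \<le> ?D" using \<open>S \<ge> 0\<close> by simp
    ultimately have "cmod ?J \<le> (C_near + C_far) * ?D"
      using \<open>C_near \<ge> 0\<close> \<open>C_far \<ge> 0\<close>
      by (smt (verit, best) distrib_right mult_nonneg_nonneg)
    then show "cmod (integral UNIV (\<lambda>X. of_real (mpow X \<gamma>) * f X *
        exp (complex_of_real (- (norm (X - Z))\<^sup>2) - \<i> * complex_of_real (w \<bullet> X))))
      \<le> (C_near + C_far) * (1 + norm Z) powr (- real m) * S"
      unfolding integral_eq_integral_weighted_phase[OF f_diff0 f_bound0 \<open>w \<bullet> Z = 0\<close>]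
      by (simp add: mult.assoc)
  qed
qed

lemma finite_mi_len_le: "finite {\<alpha> :: 'n::finite \<Rightarrow> nat. mi_len \<alpha> \<le> M}"
proof (rule finite_subset)
  show "{\<alpha> :: 'n \<Rightarrow> nat. mi_len \<alpha> \<le> M} \<subseteq> Pi\<^sub>E UNIV (\<lambda>_. {..M})"
  proof
    fix \<alpha> :: "'n \<Rightarrow> nat" assume "\<alpha> \<in> {\<alpha>. mi_len \<alpha> \<le> M}"
    moreover have "\<alpha> l \<le> mi_len \<alpha>" for l unfolding mi_len_def by (rule member_le_sum) auto
    ultimately show "\<alpha> \<in> Pi\<^sub>E UNIV (\<lambda>_. {..M})" by (auto simp: PiE_UNIV_domain intro: order.trans)
  qed
qed (rule finite_PiE; simp)

lemma O0_norm_dpartial_replicate_le_SUP: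
  fixes f :: "real ^ 'n::finite \<Rightarrow> complex"
  assumes "f \<in> O0" and "j \<le> M"
  shows "cmod (dpartial (replicate j k) f x) \<le>
    (SUP \<alpha> \<in> {\<alpha>. mi_len \<alpha> \<le> M}. SUP Y. cmod (mderiv \<alpha> f Y))"
proof -
  define \<alpha> where "\<alpha> = (\<lambda>l. if l = k then j else 0)"
  have "\<alpha> \<in> {\<alpha>. mi_len \<alpha> \<le> M}" using assms(2) by (simp add: \<alpha>_def mi_len_def)
  have "bdd_above (range (\<lambda>Y. cmod (mderiv \<beta> f Y)))" for \<beta>
  proof -
    have "bounded (range (dpartial (mi_list \<beta>) f))" using assms(1) by (simp add: O0_def)
    then show ?thesis
      unfolding mderiv_def by (auto simp: bounded_iff intro: bdd_aboveI2)
  qed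
  then have "cmod (mderiv \<alpha> f x) \<le> (SUP Y. cmod (mderiv \<alpha> f Y))"
    by (intro cSUP_upper) auto
  also have "\<dots> \<le> (SUP \<alpha> \<in> {\<alpha>. mi_len \<alpha> \<le> M}. SUP Y. cmod (mderiv \<alpha> f Y))"
    using \<open>\<alpha> \<in> {\<alpha>. mi_len \<alpha> \<le> M}\<close>
    by (intro cSUP_upper bdd_above_finite finite_imageI finite_mi_len_le)
  finally show ?thesis by (simp add: mderiv_def \<alpha>_def mi_list_single)
qed

lemma sum_UNIV_Plus: "(\<Sum>k\<in>(UNIV::('d::finite + 'd) set). g k) = (\<Sum>i\<in>UNIV. g (Inl i)) + (\<Sum>i\<in>UNIV. g (Inr i))"
  using sum.Plus[of "UNIV :: 'd set" "UNIV :: 'd set" g] by (simp add: o_def)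

lemma inner_Jmat_self: "Jmat Z \<bullet> Z = 0"
  by (simp add: inner_vec_def sum_UNIV_Plus Jmat_def sum_negf mult.commute)

lemma norm_Jmat: "norm (Jmat Z) = norm Z"
  by (simp add: norm_vec_def L2_set_def sum_UNIV_Plus Jmat_def add.commute)

theorem lemma7:
  fixes \<gamma> :: "'d::finite + 'd \<Rightarrow> nat" and m :: nat
  assumes "m > 0"
  shows "\<exists>C. \<forall>f \<in> (O0 :: (real ^ ('d + 'd) \<Rightarrow> complex) set). \<forall>Z :: real ^ ('d + 'd).
    cmod (integral UNIV (\<lambda>X. of_real (mpow X \<gamma>) * f X *
        exp (complex_of_real (- (norm (X - Z))\<^sup>2) - \<i> * complex_of_real (Jmat Z \<bullet> X))))
    \<le> C * (1 + norm Z) powr (- real m) *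
       (SUP \<alpha> \<in> {\<alpha>. mi_len \<alpha> \<le> m + mi_len \<gamma>}. SUP Y. cmod (mderiv \<alpha> f Y))"
proof -
  obtain C where C: "\<forall>(f :: real ^ ('d + 'd) \<Rightarrow> complex) S Z w.
     (\<forall>ks x. dpartial ks f differentiable (at x)) \<longrightarrow>
     (\<forall>j k x. j \<le> m + mi_len \<gamma> \<longrightarrow> cmod (dpartial (replicate j k) f x) \<le> S) \<longrightarrow>
     w \<bullet> Z = 0 \<longrightarrow> norm w = norm Z \<longrightarrow>
     cmod (integral UNIV (\<lambda>X. of_real (mpow X \<gamma>) * f X *
        exp (complex_of_real (- (norm (X - Z))\<^sup>2) - \<i> * complex_of_real (w \<bullet> X))))
     \<le> C * (1 + norm Z) powr (- real m) * S"
    using norm_oscillatory_integral_decay[of m \<gamma>] unfolding mi_len_def by blast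
  show ?thesis
  proof (intro exI[of _ C] ballI allI)
    fix f :: "real ^ ('d + 'd) \<Rightarrow> complex" and Z :: "real ^ ('d + 'd)"
    assume "f \<in> O0"
    then have "\<forall>ks x. dpartial ks f differentiable (at x)"
      and "\<forall>j k x. j \<le> m + mi_len \<gamma> \<longrightarrow> cmod (dpartial (replicate j k) f x) \<le>
        (SUP \<alpha> \<in> {\<alpha>. mi_len \<alpha> \<le> m + mi_len \<gamma>}. SUP Y. cmod (mderiv \<alpha> f Y))"
      using O0_norm_dpartial_replicate_le_SUP by (auto simp: O0_def)
    with C inner_Jmat_self[of Z] norm_Jmat[of Z] show "cmod (integral UNIV (\<lambda>X. of_real (mpow X \<gamma>) * f X *
        exp (complex_of_real (- (norm (X - Z))\<^sup>2) - \<i> * complex_of_real (Jmat Z \<bullet> X))))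
      \<le> C * (1 + norm Z) powr (- real m) *
        (SUP \<alpha> \<in> {\<alpha>. mi_len \<alpha> \<le> m + mi_len \<gamma>}. SUP Y. cmod (mderiv \<alpha> f Y))"
      by blast
  qed
qed

end
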